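(* Let $G$ be a 2-walk-regular graph that is not bipartite and not complete multipartite. If $G$ is uniquely vector colorable, then $G$ is a core.
   Context: Let $A$ be the adjacency matrix of $G$ and $\circ$ the entrywise (Schur) product. $G$ is 1-walk-regular if for every $\ell\in\mathbb{N}$ there are constants $a_\ell,b_\ell$ with $A^\ell\circ I=a_\ell I$ and $A^\ell\circ A=b_\ell A$. $G$ is 2-walk-regular if it is 1-walk-regular and moreover for every $\ell\in\mathbb{N}$ there is a constant $c_\ell$ with $A^\ell\circ A_2=c_\ell A_2$, where $A_2$ is the adjacency matrix of the distance-2 graph of $G$ (vertices adjacent iff at distance exactly 2 in $G$). A vector $t$-coloring assigns unit vectors $p_i$ to vertices with $\langle p_i,p_j\rangle\le-1/(t-1)$ on edges; $\chi_v(G)$ is the least $t\ge2$ admitting one; $G$ is uniquely vector colorable if any two optimal (i.e. vector $\chi_v(G)$-) colorings have equal Gram matrices. $G$ is a core if every homomorphism $G\to G$ is an automorphism. *)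

theory Defs
  imports Main "HOL-Library.FuncSet" Complex_Main
begin

text \<open>Finite simple graphs: vertex set = UNIV of a finite type, edge relation E
  (assumed symmetric and irreflexive where used).\<close>

definition adj :: "('a \<Rightarrow> 'a \<Rightarrow> bool) \<Rightarrow> 'a \<Rightarrow> 'a \<Rightarrow> real" where
  "adj E i j = (if E i j then 1 else 0)"

definition mmult :: "('a::finite \<Rightarrow> 'a \<Rightarrow> real) \<Rightarrow> ('a \<Rightarrow> 'a \<Rightarrow> real) \<Rightarrow> 'a \<Rightarrow> 'a \<Rightarrow> real" where
  "mmult M N i j = (\<Sum>k\<in>UNIV. M i k * N k j)"

fun mpow :: "('a::finite \<Rightarrow> 'a \<Rightarrow> real) \<Rightarrow> nat \<Rightarrow> 'a \<Rightarrow> 'a \<Rightarrow> real" where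
  "mpow M 0 = (\<lambda>i j. if i = j then 1 else 0)"
| "mpow M (Suc n) = mmult (mpow M n) M"

definition dist2 :: "('a \<Rightarrow> 'a \<Rightarrow> bool) \<Rightarrow> 'a \<Rightarrow> 'a \<Rightarrow> bool" where
  "dist2 E i j \<longleftrightarrow> i \<noteq> j \<and> \<not> E i j \<and> (\<exists>k. E i k \<and> E k j)"

definition one_walk_regular :: "('a::finite \<Rightarrow> 'a \<Rightarrow> bool) \<Rightarrow> bool" where
  "one_walk_regular E \<longleftrightarrow> (\<forall>l::nat.
     (\<exists>a. \<forall>i. mpow (adj E) l i i = a) \<and>
     (\<exists>b. \<forall>i j. E i j \<longrightarrow> mpow (adj E) l i j = b))"

definition two_walk_regular :: "('a::finite \<Rightarrow> 'a \<Rightarrow> bool) \<Rightarrow> bool" where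
  "two_walk_regular E \<longleftrightarrow> one_walk_regular E \<and> (\<forall>l::nat.
     (\<exists>c. \<forall>i j. dist2 E i j \<longrightarrow> mpow (adj E) l i j = c))"

text \<open>Vectors in R^d are represented as functions nat => real, of which only
  the coordinates below d are used.\<close>
definition ip :: "nat \<Rightarrow> (nat \<Rightarrow> real) \<Rightarrow> (nat \<Rightarrow> real) \<Rightarrow> real" where
  "ip d x y = (\<Sum>k<d. x k * y k)"

definition vector_coloring :: "('a \<Rightarrow> 'a \<Rightarrow> bool) \<Rightarrow> real \<Rightarrow> nat \<Rightarrow> ('a \<Rightarrow> nat \<Rightarrow> real) \<Rightarrow> bool" where
  "vector_coloring E t d p \<longleftrightarrow>
     (\<forall>i. ip d (p i) (p i) = 1) \<and> (\<forall>i j. E i j \<longrightarrow> ip d (p i) (p j) \<le> - 1 / (t - 1))"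

definition gram :: "nat \<Rightarrow> ('a \<Rightarrow> nat \<Rightarrow> real) \<Rightarrow> 'a \<Rightarrow> 'a \<Rightarrow> real" where
  "gram d p i j = ip d (p i) (p j)"

definition chi_v :: "('a \<Rightarrow> 'a \<Rightarrow> bool) \<Rightarrow> real" where
  "chi_v E = Inf {t. t \<ge> 2 \<and> (\<exists>d p. vector_coloring E t d p)}"

definition uniquely_vector_colorable :: "('a \<Rightarrow> 'a \<Rightarrow> bool) \<Rightarrow> bool" where
  "uniquely_vector_colorable E \<longleftrightarrow>
     (\<forall>d p d' q. vector_coloring E (chi_v E) d p \<and> vector_coloring E (chi_v E) d' q
        \<longrightarrow> gram d p = gram d' q)"

definition graph_hom :: "('a \<Rightarrow> 'a \<Rightarrow> bool) \<Rightarrow> ('a \<Rightarrow> 'a) \<Rightarrow> bool" where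
  "graph_hom E f \<longleftrightarrow> (\<forall>i j. E i j \<longrightarrow> E (f i) (f j))"

definition graph_aut :: "('a \<Rightarrow> 'a \<Rightarrow> bool) \<Rightarrow> ('a \<Rightarrow> 'a) \<Rightarrow> bool" where
  "graph_aut E f \<longleftrightarrow> bij f \<and> (\<forall>i j. E i j \<longleftrightarrow> E (f i) (f j))"

definition is_core :: "('a \<Rightarrow> 'a \<Rightarrow> bool) \<Rightarrow> bool" where
  "is_core E \<longleftrightarrow> (\<forall>f. graph_hom E f \<longrightarrow> graph_aut E f)"

definition bipartite :: "('a \<Rightarrow> 'a \<Rightarrow> bool) \<Rightarrow> bool" where
  "bipartite E \<longleftrightarrow> (\<exists>S. \<forall>i j. E i j \<longrightarrow> (i \<in> S \<longleftrightarrow> j \<notin> S))"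

definition complete_multipartite :: "('a \<Rightarrow> 'a \<Rightarrow> bool) \<Rightarrow> bool" where
  "complete_multipartite E \<longleftrightarrow> (\<exists>c :: 'a \<Rightarrow> 'a. \<forall>i j. E i j \<longleftrightarrow> c i \<noteq> c j)"

end

theory Submission
  imports Defs "HOL-Analysis.Analysis" "HOL-Computational_Algebra.Polynomial"
begin

text \<open>Let \<open>lam\<close> be the least eigenvalue of the adjacency matrix \<open>A\<close> of the \<open>k\<close>-regular
  graph and \<open>F\<close> the orthogonal projection onto its eigenspace. Being a polynomial in \<open>A\<close>,
  \<open>F\<close> has, by 2-walk-regularity, constant entries on the diagonal, on edges and on pairs
  at distance 2, so its normalised columns form a vector \<open>(1 - k/lam)\<close>-coloring, which a
  Hoffman-type bound shows to be optimal. Unique vector colorability then makes \<open>F\<close>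
  invariant under every endomorphism and forces the graph to be connected; hence for an
  idempotent power \<open>g\<close> of an endomorphism, \<open>v\<close> and \<open>g v\<close> have equal columns of \<open>F\<close>.
  If pairs at distance 2 had equal columns, the graph would be complete multipartite (if
  every edge lies in a triangle) or bipartite (if it is triangle-free, the only other case
  under 1-walk-regularity). Otherwise the vertices moved by \<open>g\<close> form a set closed under
  adjacency that misses the image of \<open>g\<close>, so \<open>g = id\<close> and every endomorphism is
  bijective.\<close>

section \<open>Polynomials in a matrix\<close>

definition mat_id :: "'a \<Rightarrow> 'a \<Rightarrow> real" where
  "mat_id i j = (if i = j then 1 else 0)"

lemma mpow_0_eq_mat_id [simp]: "mpow M 0 = mat_id"
  by (simp add: mat_id_def fun_eq_iff)

declare mpow.simps(1) [simp del]

lemma mmult_assoc: "mmult (mmult M N) P = mmult M (mmult N P)"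
  unfolding mmult_def
  by (auto intro!: ext simp: sum_distrib_left sum_distrib_right mult.assoc intro: sum.swap)

lemma mmult_mat_id_left [simp]: "mmult mat_id M = M"
proof (intro ext)
  fix i j
  have "mmult mat_id M i j = (\<Sum>k\<in>UNIV. if i = k then M k j else 0)"
    unfolding mmult_def mat_id_def by (rule sum.cong) auto
  thus "mmult mat_id M i j = M i j" by simp
qed

lemma mmult_mat_id_right [simp]: "mmult M mat_id = M"
proof (intro ext)
  fix i j
  have "mmult M mat_id i j = (\<Sum>k\<in>UNIV. if k = j then M i k else 0)"
    unfolding mmult_def mat_id_def by (rule sum.cong) auto
  thus "mmult M mat_id i j = M i j" by simp
qed

lemma mpow_two: "mpow M 2 = mmult M M"
  by (simp add: numeral_2_eq_2)

lemma mmult_zero_left [simp]: "mmult (\<lambda>i j. 0) M = (\<lambda>i j. 0)"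
  unfolding mmult_def by simp

lemma mmult_zero_right [simp]: "mmult M (\<lambda>i j. 0) = (\<lambda>i j. 0)"
  unfolding mmult_def by simp

lemma mmult_add_left: "mmult (\<lambda>i j. X i j + Y i j) M = (\<lambda>i j. mmult X M i j + mmult Y M i j)"
  unfolding mmult_def by (auto intro!: ext simp: distrib_right sum.distrib)

lemma mmult_scale_left: "mmult (\<lambda>i j. c * X i j) M = (\<lambda>i j. c * mmult X M i j)"
  unfolding mmult_def by (auto intro!: ext simp: sum_distrib_left mult.assoc)

lemma mmult_scale_right: "mmult M (\<lambda>i j. c * X i j) = (\<lambda>i j. c * mmult M X i j)"
  unfolding mmult_def by (auto intro!: ext simp: sum_distrib_left algebra_simps)

lemma mmult_sum_right: "mmult M (\<lambda>i j. \<Sum>l\<in>L. X l i j) = (\<lambda>i j. \<Sum>l\<in>L. mmult M (X l) i j)"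
  unfolding mmult_def by (auto intro!: ext simp: sum_distrib_left intro: sum.swap)

lemma mmult_shift_left:
  "mmult (\<lambda>i j. A i j - lam * mat_id i j) Z = (\<lambda>i j. mmult A Z i j - lam * Z i j)"
proof (intro ext)
  fix i j
  have "mmult (\<lambda>i j. A i j - lam * mat_id i j) Z i j
      = mmult A Z i j - (\<Sum>k\<in>UNIV. lam * mat_id i k * Z k j)"
    unfolding mmult_def by (simp add: algebra_simps sum_subtractf)
  also have "(\<Sum>k\<in>UNIV. lam * mat_id i k * Z k j) = (\<Sum>k\<in>UNIV. if i = k then lam * Z i j else 0)"
    by (rule sum.cong) (auto simp: mat_id_def)
  finally show "mmult (\<lambda>i j. A i j - lam * mat_id i j) Z i j = mmult A Z i j - lam * Z i j"
    by simp
qed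

lemma mpow_Suc_left: "mpow M (Suc n) = mmult M (mpow M n)"
proof (induction n)
  case 0
  then show ?case by simp
next
  case (Suc n)
  have "mpow M (Suc (Suc n)) = mmult (mmult M (mpow M n)) M" using Suc by simp
  also have "\<dots> = mmult M (mpow M (Suc n))" by (simp add: mmult_assoc)
  finally show ?case .
qed

lemma mpow_sym:
  assumes "\<And>i j. M i j = M j i"
  shows "mpow M n i j = mpow M n j i"
proof (induction n arbitrary: i j)
  case 0
  then show ?case by (simp add: mat_id_def)
next
  case (Suc n)
  have "mpow M (Suc n) j i = (\<Sum>k\<in>UNIV. mpow M n j k * M k i)" by (simp add: mmult_def)
  also have "\<dots> = (\<Sum>k\<in>UNIV. M i k * mpow M n k j)" using Suc assms by (simp add: mult.commute)
  also have "\<dots> = mpow M (Suc n) i j" by (simp only: mpow_Suc_left mmult_def)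
  finally show ?case by simp
qed

definition poly_mat :: "('a::finite \<Rightarrow> 'a \<Rightarrow> real) \<Rightarrow> real poly \<Rightarrow> 'a \<Rightarrow> 'a \<Rightarrow> real" where
  "poly_mat M p = (\<lambda>i j. \<Sum>l\<le>degree p. coeff p l * mpow M l i j)"

lemma poly_mat_bound:
  assumes "degree p < N"
  shows "poly_mat M p i j = (\<Sum>l<N. coeff p l * mpow M l i j)"
proof -
  have "(\<Sum>l<N. coeff p l * mpow M l i j) = (\<Sum>l\<le>degree p. coeff p l * mpow M l i j)"
    by (rule sum.mono_neutral_right) (use assms in \<open>auto simp: coeff_eq_0 not_le\<close>)
  thus ?thesis unfolding poly_mat_def by simp
qed

lemma poly_mat_0 [simp]: "poly_mat M 0 = (\<lambda>i j. 0)"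
  unfolding poly_mat_def by simp

lemma poly_mat_1 [simp]: "poly_mat M 1 = mat_id"
  unfolding poly_mat_def by simp

lemma poly_mat_add: "poly_mat M (p + q) = (\<lambda>i j. poly_mat M p i j + poly_mat M q i j)"
proof (intro ext)
  fix i j
  define N where "N = Suc (degree p + degree q)"
  have "degree (p + q) < N" unfolding N_def using degree_add_le_max[of p q] by linarith
  moreover have "degree p < N" "degree q < N" unfolding N_def by auto
  ultimately show "poly_mat M (p + q) i j = poly_mat M p i j + poly_mat M q i j"
    by (simp add: poly_mat_bound[of _ N] distrib_right sum.distrib)
qed

lemma poly_mat_smult: "poly_mat M (smult c p) = (\<lambda>i j. c * poly_mat M p i j)"
proof (intro ext)
  fix i j
  define N where "N = Suc (degree p)"
  have "degree (smult c p) < N" "degree p < N" unfolding N_def by auto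
  thus "poly_mat M (smult c p) i j = c * poly_mat M p i j"
    by (simp add: poly_mat_bound[of _ N] sum_distrib_left mult.assoc)
qed

lemma poly_mat_pCons:
  "poly_mat M (pCons a p) = (\<lambda>i j. a * mat_id i j + mmult M (poly_mat M p) i j)"
proof (intro ext)
  fix i j
  define N where "N = Suc (degree p)"
  have d1: "degree (pCons a p) < Suc N" unfolding N_def by (simp add: degree_pCons_le le_imp_less_Suc)
  have d2: "poly_mat M p = (\<lambda>i j. \<Sum>l<N. coeff p l * mpow M l i j)"
    by (intro ext poly_mat_bound) (simp add: N_def)
  have "poly_mat M (pCons a p) i j = (\<Sum>l<Suc N. coeff (pCons a p) l * mpow M l i j)"
    by (rule poly_mat_bound[OF d1])
  also have "\<dots> = a * mat_id i j + (\<Sum>l<N. coeff p l * mpow M (Suc l) i j)"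
    by (subst sum.lessThan_Suc_shift) (simp del: mpow.simps sum.lessThan_Suc)
  also have "(\<Sum>l<N. coeff p l * mpow M (Suc l) i j) = mmult M (poly_mat M p) i j"
    unfolding d2 mmult_sum_right by (simp del: mpow.simps add: mmult_scale_right mpow_Suc_left)
  finally show "poly_mat M (pCons a p) i j = a * mat_id i j + mmult M (poly_mat M p) i j" .
qed

lemma poly_mat_mult: "poly_mat M (p * q) = mmult (poly_mat M p) (poly_mat M q)"
proof (induction p)
  case 0
  then show ?case by simp
next
  case (pCons a p)
  have "poly_mat M (pCons a p * q) = poly_mat M (smult a q + pCons 0 (p * q))" by simp
  also have "\<dots> = (\<lambda>i j. a * poly_mat M q i j + mmult M (mmult (poly_mat M p) (poly_mat M q)) i j)"
    by (simp add: poly_mat_add poly_mat_smult poly_mat_pCons pCons.IH mat_id_def)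
  also have "\<dots> = mmult (poly_mat M (pCons a p)) (poly_mat M q)"
    by (simp add: poly_mat_pCons mmult_add_left mmult_scale_left mmult_assoc)
  finally show ?case .
qed

lemma poly_mat_power: "poly_mat M (p ^ r) = mpow (poly_mat M p) r"
  by (induction r) (simp_all del: mpow.simps add: poly_mat_mult mpow_Suc_left)

lemma poly_mat_linear: "poly_mat M [:-c, 1:] = (\<lambda>i j. M i j - c * mat_id i j)"
  by (intro ext) (simp add: poly_mat_pCons)

lemma poly_mat_monom: "poly_mat M (monom c l) = (\<lambda>i j. c * mpow M l i j)"
proof (intro ext)
  fix i j
  have "degree (monom c l) < Suc l" by (simp add: degree_monom_le le_imp_less_Suc)
  hence "poly_mat M (monom c l) i j = (\<Sum>k<Suc l. coeff (monom c l) k * mpow M k i j)"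
    by (rule poly_mat_bound)
  also have "\<dots> = (\<Sum>k<Suc l. if k = l then c * mpow M l i j else 0)"
    by (rule sum.cong) (auto simp: coeff_monom)
  finally show "poly_mat M (monom c l) i j = c * mpow M l i j" by simp
qed

lemma poly_mat_sum: "poly_mat M (\<Sum>l\<in>L. f l) = (\<lambda>i j. \<Sum>l\<in>L. poly_mat M (f l) i j)"
  by (induction L rule: infinite_finite_induct) (simp_all add: poly_mat_add)

lemma poly_mat_sym:
  assumes "\<And>i j. M i j = M j i"
  shows "poly_mat M p i j = poly_mat M p j i"
  unfolding poly_mat_def using mpow_sym[of M, OF assms] by simp

lemma poly_mat_eq_if_mpow_eq:
  assumes "\<And>l. mpow M l i j = mpow M l i' j'"
  shows "poly_mat M p i j = poly_mat M p i' j'"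
  unfolding poly_mat_def using assms by simp

lemma poly_mat_eigen:
  assumes "mmult A X = (\<lambda>i j. lam * X i j)"
  shows "mmult (poly_mat A p) X = (\<lambda>i j. poly p lam * X i j)"
proof (induction p)
  case 0
  then show ?case by simp
next
  case (pCons a p)
  have "mmult (poly_mat A (pCons a p)) X = (\<lambda>i j. a * X i j + mmult A (mmult (poly_mat A p) X) i j)"
    by (simp add: poly_mat_pCons mmult_add_left mmult_scale_left mmult_assoc)
  also have "\<dots> = (\<lambda>i j. a * X i j + poly p lam * (lam * X i j))"
    by (simp add: pCons.IH mmult_scale_right assms)
  also have "\<dots> = (\<lambda>i j. poly (pCons a p) lam * X i j)"
    by (simp add: algebra_simps)
  finally show ?case .
qed

lemma ex_nontrivial_linear_relation:
  fixes V :: "nat \<Rightarrow> real^'n"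
  shows "\<exists>c. (\<exists>l\<le>CARD('n). c l \<noteq> 0) \<and> (\<Sum>l\<le>CARD('n). c l *\<^sub>R V l) = 0"
proof (cases "inj_on V {..CARD('n)}")
  case False
  then obtain a b where ab: "a \<le> CARD('n)" "b \<le> CARD('n)" "a \<noteq> b" "V a = V b"
    unfolding inj_on_def by auto
  define c where "c l = (if l = a then 1 else 0) - (if l = b then 1 else (0::real))" for l
  have "(\<Sum>l\<le>CARD('n). c l *\<^sub>R V l)
      = (\<Sum>l\<le>CARD('n). (if l = a then V l else 0) - (if l = b then V l else 0))"
    by (rule sum.cong) (auto simp: c_def)
  also have "\<dots> = 0" using ab by (simp add: sum_subtractf)
  finally show ?thesis using ab by (intro exI[of _ c]) (auto simp: c_def)
next
  case True
  define S where "S = V ` {..CARD('n)}"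
  have "card S = Suc CARD('n)" unfolding S_def using card_image[OF True] by simp
  hence "dependent S" by (intro dependent_biggerset) simp
  then obtain T u where T: "finite T" "T \<subseteq> S" "(\<Sum>v\<in>T. u v *\<^sub>R v) = 0" "\<exists>v\<in>T. u v \<noteq> 0"
    unfolding real_vector.dependent_explicit by blast
  define c where "c l = (if V l \<in> T then u (V l) else 0)" for l
  have "(\<Sum>l\<le>CARD('n). c l *\<^sub>R V l) = (\<Sum>l\<in>{l\<in>{..CARD('n)}. V l \<in> T}. u (V l) *\<^sub>R V l)"
    by (rule sum.mono_neutral_cong_right) (auto simp: c_def)
  also have "\<dots> = (\<Sum>w\<in>V ` {l\<in>{..CARD('n)}. V l \<in> T}. u w *\<^sub>R w)"
    by (rule sum.reindex[symmetric, unfolded comp_def]) (use True in \<open>auto intro: inj_on_subset\<close>)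
  also have "V ` {l\<in>{..CARD('n)}. V l \<in> T} = T" using T(2) unfolding S_def by blast
  finally have "(\<Sum>l\<le>CARD('n). c l *\<^sub>R V l) = 0" using T(3) by simp
  moreover obtain w where "w \<in> T" "u w \<noteq> 0" using T by blast
  moreover then obtain l where "l \<le> CARD('n)" "w = V l" using T(2) unfolding S_def by blast
  ultimately show ?thesis by (intro exI[of _ c]) (auto simp: c_def)
qed

lemma mpow_linearly_dependent:
  fixes M :: "'a::finite \<Rightarrow> 'a \<Rightarrow> real"
  shows "\<exists>N c. (\<exists>l\<le>N. c l \<noteq> 0) \<and> (\<forall>i j. (\<Sum>l\<le>N. c l * mpow M l i j) = 0)"
proof -
  define V :: "nat \<Rightarrow> real^('a \<times> 'a)" where "V l = (\<chi> ij. mpow M l (fst ij) (snd ij))" for l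
  obtain c where c: "\<exists>l\<le>CARD('a \<times> 'a). c l \<noteq> 0" "(\<Sum>l\<le>CARD('a \<times> 'a). c l *\<^sub>R V l) = 0"
    using ex_nontrivial_linear_relation by blast
  have "(\<Sum>l\<le>CARD('a \<times> 'a). c l * mpow M l i j) = 0" for i j
  proof -
    have "(\<Sum>l\<le>CARD('a \<times> 'a). c l *\<^sub>R V l) $ (i, j) = 0" unfolding c(2) by simp
    thus ?thesis by (simp add: V_def)
  qed
  thus ?thesis using c(1) by blast
qed

lemma poly_mat_annihilator:
  fixes M :: "'a::finite \<Rightarrow> 'a \<Rightarrow> real"
  shows "\<exists>m. m \<noteq> 0 \<and> poly_mat M m = (\<lambda>i j. 0)"
proof -
  obtain N c where c: "\<exists>l\<le>N. c l \<noteq> 0" "\<And>i j. (\<Sum>l\<le>N. c l * mpow M l i j) = 0"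
    using mpow_linearly_dependent by blast
  define m where "m = (\<Sum>l\<le>N. monom (c l) l)"
  have "coeff m l = (if l \<le> N then c l else 0)" for l
    unfolding m_def by (simp add: coeff_sum coeff_monom)
  hence "m \<noteq> 0" using c(1) by (metis coeff_0)
  moreover have "poly_mat M m = (\<lambda>i j. 0)"
    unfolding m_def poly_mat_sum by (simp add: poly_mat_monom c(2))
  ultimately show ?thesis by blast
qed

section \<open>The least eigenvalue and its eigenprojector\<close>

definition quad_form :: "('a::finite \<Rightarrow> 'a \<Rightarrow> real) \<Rightarrow> ('a \<Rightarrow> real) \<Rightarrow> real" where
  "quad_form M x = (\<Sum>i\<in>UNIV. \<Sum>j\<in>UNIV. M i j * x i * x j)"

definition sq_norm :: "('a::finite \<Rightarrow> real) \<Rightarrow> real" where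
  "sq_norm x = (\<Sum>i\<in>UNIV. (x i)\<^sup>2)"

definition least_rayleigh_quotient :: "('a::finite \<Rightarrow> 'a \<Rightarrow> real) \<Rightarrow> real \<Rightarrow> bool" where
  "least_rayleigh_quotient M lam \<longleftrightarrow>
     (\<forall>y. lam * sq_norm y \<le> quad_form M y) \<and> (\<exists>x. sq_norm x = 1 \<and> quad_form M x = lam)"

text \<open>Stands in for the orthogonal projection onto the \<open>lam\<close>-eigenspace; being a polynomial
  in \<open>M\<close> is what lets its entries inherit walk-regularity.\<close>

definition eigen_projector :: "('a::finite \<Rightarrow> 'a \<Rightarrow> real) \<Rightarrow> real \<Rightarrow> ('a \<Rightarrow> 'a \<Rightarrow> real) \<Rightarrow> bool" where
  "eigen_projector M lam F \<longleftrightarrow>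
     F \<noteq> (\<lambda>i j. 0) \<and> mmult M F = (\<lambda>i j. lam * F i j) \<and> (\<forall>i j. F i j = F j i) \<and>
     mmult F F = F \<and> (\<exists>p. F = poly_mat M p)"

lemma sq_norm_eq_0_iff: "sq_norm x = 0 \<longleftrightarrow> x = (\<lambda>i. 0)"
  unfolding sq_norm_def by (subst sum_nonneg_eq_0_iff) (auto simp: fun_eq_iff)

lemma sq_norm_nonneg: "sq_norm x \<ge> 0"
  unfolding sq_norm_def by (simp add: sum_nonneg)

lemma least_rayleigh_quotient_exists:
  fixes M :: "'a::finite \<Rightarrow> 'a \<Rightarrow> real"
  shows "\<exists>lam. least_rayleigh_quotient M lam"
proof -
  define g :: "real^'a \<Rightarrow> real" where "g v = (\<Sum>i\<in>UNIV. \<Sum>j\<in>UNIV. M i j * v$i * v$j)" for v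
  have norm_vec: "norm v = sqrt (\<Sum>i\<in>UNIV. (v$i)\<^sup>2)" for v :: "real^'a"
    by (simp add: norm_eq_sqrt_inner inner_vec_def power2_eq_square)
  have cont: "continuous_on (sphere 0 1) g" unfolding g_def by (intro continuous_intros)
  obtain v0 where v0: "v0 \<in> sphere 0 1" "\<And>w. w \<in> sphere 0 1 \<Longrightarrow> g v0 \<le> g w"
    using continuous_attains_inf[OF compact_sphere _ cont] by auto
  define x where "x i = v0 $ i" for i
  have "sq_norm x = 1" using v0(1) norm_vec[of v0] unfolding sq_norm_def x_def by simp
  moreover have "quad_form M x = g v0" unfolding quad_form_def g_def x_def by simp
  moreover have "g v0 * sq_norm y \<le> quad_form M y" for y
  proof (cases "y = (\<lambda>i. 0)")
    case True
    thus ?thesis by (simp add: quad_form_def sq_norm_def)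
  next
    case False
    hence pos: "sq_norm y > 0" using sq_norm_eq_0_iff sq_norm_nonneg by (metis order_le_less)
    define s where "s = sqrt (sq_norm y)"
    have s: "s > 0" "s * s = sq_norm y" using pos unfolding s_def by auto
    define w :: "real^'a" where "w = (\<chi> i. y i / s)"
    have "(\<Sum>i\<in>UNIV. (w$i)\<^sup>2) = sq_norm y / (s * s)"
      unfolding w_def sq_norm_def by (simp add: power_divide sum_divide_distrib power2_eq_square)
    hence "norm w = 1" using norm_vec[of w] pos s by simp
    hence "g v0 \<le> g w" using v0(2) by simp
    also have "g w = quad_form M y / (s * s)"
      unfolding g_def quad_form_def w_def by (simp add: sum_divide_distrib)
    finally show ?thesis using s pos by (simp add: pos_le_divide_eq)
  qed
  ultimately show ?thesis unfolding least_rayleigh_quotient_def by blast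
qed

lemma quad_form_add_smult:
  "quad_form B (\<lambda>i. x i + t * z i) = quad_form B x
     + t * (\<Sum>i\<in>UNIV. \<Sum>j\<in>UNIV. B i j * (x i * z j + z i * x j)) + t\<^sup>2 * quad_form B z"
proof -
  have expand: "B i j * (x i + t * z i) * (x j + t * z j) = B i j * x i * x j
      + t * (B i j * (x i * z j + z i * x j)) + t\<^sup>2 * (B i j * z i * z j)" for i j
    by (simp add: algebra_simps power2_eq_square)
  show ?thesis unfolding quad_form_def expand sum.distrib by (simp only: sum_distrib_left[symmetric])
qed

text \<open>A null vector of a positive semidefinite form lies in its kernel: perturbing \<open>x\<close>
  by \<open>t\<close> times \<open>B x\<close> would make the form negative for small \<open>t < 0\<close>.\<close>

lemma psd_null_vector_kernel:
  fixes B :: "'a::finite \<Rightarrow> 'a \<Rightarrow> real"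
  assumes sym: "\<And>i j. B i j = B j i"
    and psd: "\<And>y. quad_form B y \<ge> 0"
    and null: "quad_form B x = 0"
  shows "(\<Sum>j\<in>UNIV. B i j * x j) = 0"
proof -
  define z where "z i = (\<Sum>j\<in>UNIV. B i j * x j)" for i
  define s where "s = sq_norm z"
  define c where "c = quad_form B z"
  have c0: "c \<ge> 0" unfolding c_def using psd by simp
  have "(\<Sum>i\<in>UNIV. \<Sum>j\<in>UNIV. B i j * (z i * x j)) = s"
    unfolding s_def sq_norm_def z_def by (simp add: sum_distrib_left power2_eq_square algebra_simps)
  moreover have "(\<Sum>i\<in>UNIV. \<Sum>j\<in>UNIV. B i j * (x i * z j)) = (\<Sum>j\<in>UNIV. \<Sum>i\<in>UNIV. B j i * (z j * x i))"
    by (subst sum.swap) (simp add: sym algebra_simps)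
  ultimately have "(\<Sum>i\<in>UNIV. \<Sum>j\<in>UNIV. B i j * (x i * z j + z i * x j)) = 2 * s"
    by (simp add: distrib_left sum.distrib)
  hence ineq: "0 \<le> t * (2 * s + t * c)" for t
    using psd[of "\<lambda>i. x i + t * z i"] unfolding quad_form_add_smult c_def null
    by (simp add: algebra_simps power2_eq_square)
  have "s = 0"
  proof (rule ccontr)
    assume "s \<noteq> 0"
    hence sp: "s > 0" using sq_norm_nonneg unfolding s_def by (metis order_le_less)
    define t where "t = - s / (c + 1)"
    have "t < 0" unfolding t_def using sp c0 by simp
    moreover have "s * c / (c + 1) \<le> s" using sp c0 by (simp add: divide_le_eq algebra_simps)
    hence "2 * s + t * c > 0" unfolding t_def using sp by simp
    ultimately show False using ineq[of t] mult_neg_pos by fastforce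
  qed
  thus ?thesis unfolding s_def sq_norm_eq_0_iff z_def by (simp add: fun_eq_iff)
qed

lemma least_rayleigh_quotient_eigenvector:
  fixes A :: "'a::finite \<Rightarrow> 'a \<Rightarrow> real"
  assumes sym: "\<And>i j. A i j = A j i" and least: "least_rayleigh_quotient A lam"
  shows "\<exists>X. X \<noteq> (\<lambda>i j. 0) \<and> mmult A X = (\<lambda>i j. lam * X i j)"
proof -
  obtain x where x: "sq_norm x = 1" "quad_form A x = lam"
    using least unfolding least_rayleigh_quotient_def by blast
  define B where "B = (\<lambda>i j. A i j - lam * mat_id i j)"
  have quad_form_B: "quad_form B y = quad_form A y - lam * sq_norm y" for y
  proof -
    have "(\<Sum>j\<in>UNIV. mat_id i j * y i * y j) = (y i)\<^sup>2" for i
    proof -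
      have "(\<Sum>j\<in>UNIV. mat_id i j * y i * y j) = (\<Sum>j\<in>UNIV. if i = j then (y i)\<^sup>2 else 0)"
        by (rule sum.cong) (auto simp: mat_id_def power2_eq_square)
      thus ?thesis by simp
    qed
    hence "(\<Sum>i\<in>UNIV. \<Sum>j\<in>UNIV. lam * mat_id i j * y i * y j) = lam * sq_norm y"
      unfolding sq_norm_def by (simp add: sum_distrib_left[symmetric] mult.assoc)
    thus ?thesis unfolding B_def quad_form_def
      by (simp add: left_diff_distrib sum_subtractf)
  qed
  have "(\<Sum>j\<in>UNIV. B i j * x j) = 0" for i
  proof (rule psd_null_vector_kernel)
    show "B i j = B j i" for i j unfolding B_def mat_id_def using sym by auto
    show "quad_form B y \<ge> 0" for y
      using least unfolding quad_form_B least_rayleigh_quotient_def by simp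
    show "quad_form B x = 0" unfolding quad_form_B using x by simp
  qed
  hence "mmult B (\<lambda>i j. x i) = (\<lambda>i j. 0)" unfolding mmult_def by simp
  hence "mmult A (\<lambda>i j. x i) = (\<lambda>i j. lam * x i)"
    unfolding B_def mmult_shift_left by (simp add: fun_eq_iff)
  moreover have "(\<lambda>i (j::'a). x i) \<noteq> (\<lambda>i j. 0)"
    using x(1) sq_norm_eq_0_iff[of x] by (auto simp: fun_eq_iff sq_norm_def)
  ultimately show ?thesis by blast
qed

lemma sym_mmult_square_eq_0:
  fixes B :: "'a::finite \<Rightarrow> 'a \<Rightarrow> real"
  assumes sym: "\<And>i j. B i j = B j i"
    and "mmult B (mmult B Z) = (\<lambda>i j. 0)"
  shows "mmult B Z = (\<lambda>i j. 0)"
proof (intro ext)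
  fix i j
  define Y where "Y = mmult B Z"
  have "(\<Sum>a\<in>UNIV. (Y a j)\<^sup>2) = (\<Sum>a\<in>UNIV. \<Sum>k\<in>UNIV. Y a j * B a k * Z k j)"
    unfolding Y_def mmult_def by (simp add: power2_eq_square sum_distrib_left mult.assoc)
  also have "\<dots> = (\<Sum>k\<in>UNIV. Z k j * (\<Sum>a\<in>UNIV. B k a * Y a j))"
    by (subst sum.swap) (simp add: sum_distrib_left sym algebra_simps)
  also have "\<dots> = 0" using assms(2) unfolding Y_def by (simp add: mmult_def[of B "mmult B Z"] fun_eq_iff)
  finally have "\<forall>a\<in>UNIV. (Y a j)\<^sup>2 = 0" by (subst sum_nonneg_eq_0_iff[symmetric]) auto
  thus "mmult B Z i j = 0" unfolding Y_def by simp
qed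

lemma sym_mmult_mpow_eq_0:
  assumes sym: "\<And>i j. B i j = B j i"
  shows "mmult (mpow B (Suc r)) Z = (\<lambda>i j. 0) \<Longrightarrow> mmult B Z = (\<lambda>i j. 0)"
proof (induction r arbitrary: Z)
  case 0
  then show ?case by simp
next
  case (Suc r)
  have "mmult (mpow B (Suc r)) (mmult B Z) = mmult (mpow B (Suc (Suc r))) Z"
    by (simp only: mpow.simps(2) mmult_assoc)
  hence "mmult B (mmult B Z) = (\<lambda>i j. 0)" using Suc by simp
  thus ?case using sym_mmult_square_eq_0[of B, OF sym] by blast
qed

lemma poly_mat_annihilator_factor:
  fixes A :: "'a::finite \<Rightarrow> 'a \<Rightarrow> real"
  obtains r q where "poly q lam = 1"
    and "mmult (mpow (\<lambda>i j. A i j - lam * mat_id i j) r) (poly_mat A q) = (\<lambda>i j. 0)"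
proof -
  obtain m where m: "m \<noteq> 0" "poly_mat A m = (\<lambda>i j. 0)" using poly_mat_annihilator by blast
  define r where "r = order lam m"
  obtain q where q: "m = [:-lam, 1:] ^ r * q" "\<not> [:-lam, 1:] dvd q"
    using order_decomp[OF m(1)] unfolding r_def by blast
  have q_lam: "poly q lam \<noteq> 0" using q(2) poly_eq_0_iff_dvd by blast
  define q' where "q' = smult (1 / poly q lam) q"
  have "mmult (mpow (\<lambda>i j. A i j - lam * mat_id i j) r) (poly_mat A q')
      = poly_mat A (smult (1 / poly q lam) m)"
    unfolding q'_def q(1)
    by (simp only: poly_mat_linear[symmetric] poly_mat_power[symmetric] poly_mat_mult[symmetric] mult_smult_right)
  also have "\<dots> = (\<lambda>i j. 0)" by (simp add: poly_mat_smult m(2))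
  finally show thesis using that[of q' r] q_lam unfolding q'_def by simp
qed

text \<open>With \<open>(x - lam)\<^sup>r q\<close> an annihilator of \<open>A\<close> and \<open>q(lam) = 1\<close>, the matrix
  \<open>q(A)\<close> is the projector: symmetric matrices are semisimple, so \<open>(A - lam)\<^sup>r q(A) = 0\<close>
  already forces \<open>(A - lam) q(A) = 0\<close>.\<close>

lemma eigen_projector_exists:
  fixes A X :: "'a::finite \<Rightarrow> 'a \<Rightarrow> real"
  assumes sym: "\<And>i j. A i j = A j i"
    and X: "X \<noteq> (\<lambda>i j. 0)" and AX: "mmult A X = (\<lambda>i j. lam * X i j)"
  shows "\<exists>F. eigen_projector A lam F"
proof -
  define B where "B = (\<lambda>i j. A i j - lam * mat_id i j)"
  obtain r q where q: "poly q lam = 1" and BQ: "mmult (mpow B r) (poly_mat A q) = (\<lambda>i j. 0)"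
    unfolding B_def by (rule poly_mat_annihilator_factor)
  define F where "F = poly_mat A q"
  have FX: "mmult F X = X"
    unfolding F_def poly_mat_eigen[OF AX] q by simp
  have "r \<noteq> 0"
  proof
    assume "r = 0"
    hence "F = (\<lambda>i j. 0)" using BQ unfolding F_def by simp
    thus False using FX X by simp
  qed
  then obtain r' where "r = Suc r'" using not0_implies_Suc by blast
  hence "mmult B F = (\<lambda>i j. 0)"
    using sym_mmult_mpow_eq_0[of B] BQ sym unfolding B_def F_def mat_id_def by auto
  hence AF: "mmult A F = (\<lambda>i j. lam * F i j)"
    unfolding B_def mmult_shift_left by (simp add: fun_eq_iff)
  have "mmult F F = F"
    using poly_mat_eigen[OF AF, of q] q unfolding F_def by simp
  moreover have "F i j = F j i" for i j unfolding F_def by (rule poly_mat_sym[OF sym])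
  moreover have "F \<noteq> (\<lambda>i j. 0)" using FX X by auto
  ultimately show ?thesis unfolding eigen_projector_def using AF F_def by blast
qed

section \<open>Walks and walk-regularity\<close>

fun walk :: "('a \<Rightarrow> 'a \<Rightarrow> bool) \<Rightarrow> nat \<Rightarrow> 'a \<Rightarrow> 'a \<Rightarrow> bool" where
  "walk E 0 x y = (x = y)"
| "walk E (Suc l) x y = (\<exists>k. walk E l x k \<and> E k y)"

definition reachable :: "('a \<Rightarrow> 'a \<Rightarrow> bool) \<Rightarrow> 'a \<Rightarrow> 'a \<Rightarrow> bool" where
  "reachable E x y \<longleftrightarrow> (\<exists>l. walk E l x y)"

lemma reachable_refl: "reachable E x x"
  unfolding reachable_def by (meson walk.simps(1))

lemma reachable_step: "reachable E x y \<Longrightarrow> E y z \<Longrightarrow> reachable E x z"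
  unfolding reachable_def by (meson walk.simps(2))

lemma walk_closed:
  assumes "\<And>v w. v \<in> M \<Longrightarrow> E v w \<Longrightarrow> w \<in> M" "walk E l x y" "x \<in> M"
  shows "y \<in> M"
  using assms(2,3) by (induction l arbitrary: y) (auto intro: assms(1))

lemma mpow_adj_walk: "mpow (adj E) l x y \<noteq> 0 \<Longrightarrow> walk E l x y"
proof (induction l arbitrary: y)
  case 0
  then show ?case by (simp add: mat_id_def split: if_splits)
next
  case (Suc l)
  have "(\<Sum>k\<in>UNIV. mpow (adj E) l x k * adj E k y) \<noteq> 0" using Suc.prems by (simp add: mmult_def)
  then obtain k where "mpow (adj E) l x k * adj E k y \<noteq> 0"
    by (rule sum.not_neutral_contains_not_neutral)
  hence "mpow (adj E) l x k \<noteq> 0" "E k y" by (auto simp: adj_def split: if_splits)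
  thus ?case using Suc.IH by auto
qed

lemma poly_mat_adj_unreachable:
  assumes "\<not> reachable E x y"
  shows "poly_mat (adj E) p x y = 0"
proof -
  have "mpow (adj E) l x y = 0" for l using assms mpow_adj_walk unfolding reachable_def by blast
  thus ?thesis unfolding poly_mat_def by simp
qed

lemma adj_sym: "(\<And>i j. E i j \<Longrightarrow> E j i) \<Longrightarrow> adj E i j = adj E j i"
  unfolding adj_def by auto

lemma mpow_adj_two_eq_0_iff: "mpow (adj E) 2 u w = 0 \<longleftrightarrow> (\<nexists>c. E u c \<and> E c w)"
proof -
  have "mpow (adj E) 2 u w = (\<Sum>c\<in>UNIV. adj E u c * adj E c w)"
    by (simp add: mpow_two mmult_def)
  moreover have "(\<Sum>c\<in>UNIV. adj E u c * adj E c w) = 0 \<longleftrightarrow> (\<forall>c. adj E u c * adj E c w = 0)"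
    by (subst sum_nonneg_eq_0_iff) (auto simp: adj_def)
  ultimately show ?thesis by (auto simp: adj_def)
qed

lemma mpow_adj_two_diag:
  assumes "\<And>i j. E i j \<Longrightarrow> E j i"
  shows "mpow (adj E) 2 i i = (\<Sum>j\<in>UNIV. adj E i j)"
  unfolding mpow_two mmult_def by (rule sum.cong) (auto simp: adj_def assms)

lemma one_walk_regular_diag:
  assumes "one_walk_regular E"
  shows "mpow (adj E) l i i = mpow (adj E) l i' i'"
proof -
  obtain a where "\<forall>i. mpow (adj E) l i i = a" using assms unfolding one_walk_regular_def by meson
  thus ?thesis by simp
qed

lemma one_walk_regular_edge:
  assumes "one_walk_regular E" "E i j" "E i' j'"
  shows "mpow (adj E) l i j = mpow (adj E) l i' j'"
proof -
  obtain b where "\<forall>i j. E i j \<longrightarrow> mpow (adj E) l i j = b"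
    using assms(1) unfolding one_walk_regular_def by meson
  thus ?thesis using assms(2,3) by simp
qed

lemma two_walk_regular_dist2:
  assumes "two_walk_regular E" "dist2 E i j" "dist2 E i' j'"
  shows "mpow (adj E) l i j = mpow (adj E) l i' j'"
proof -
  obtain c where "\<forall>i j. dist2 E i j \<longrightarrow> mpow (adj E) l i j = c"
    using assms(1) unfolding two_walk_regular_def by meson
  thus ?thesis using assms(2,3) by simp
qed

lemma one_walk_regular_regular:
  assumes "\<And>i j. E i j \<Longrightarrow> E j i" "one_walk_regular E"
  shows "(\<Sum>j\<in>UNIV. adj E i j) = (\<Sum>j\<in>UNIV. adj E i' j)"
proof -
  have "mpow (adj E) 2 i i = mpow (adj E) 2 i' i'" by (rule one_walk_regular_diag[OF assms(2)])
  thus ?thesis by (simp only: mpow_adj_two_diag[OF assms(1)])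
qed

lemma one_walk_regular_triangle_cases:
  assumes "one_walk_regular E"
  shows "(\<forall>u w. E u w \<longrightarrow> (\<exists>c. E u c \<and> E c w)) \<or> (\<forall>u w c. E u w \<longrightarrow> E u c \<longrightarrow> \<not> E c w)"
proof (rule disjCI)
  assume "\<not> (\<forall>u w c. E u w \<longrightarrow> E u c \<longrightarrow> \<not> E c w)"
  then obtain u w c where "E u w" "E u c" "E c w" by blast
  hence uw: "mpow (adj E) 2 u w \<noteq> 0" unfolding mpow_adj_two_eq_0_iff by blast
  show "\<forall>u' w'. E u' w' \<longrightarrow> (\<exists>c. E u' c \<and> E c w')"
  proof (intro allI impI)
    fix u' w' assume "E u' w'"
    hence "mpow (adj E) 2 u' w' = mpow (adj E) 2 u w"
      by (rule one_walk_regular_edge[OF assms _ \<open>E u w\<close>])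
    hence "mpow (adj E) 2 u' w' \<noteq> 0" using uw by simp
    thus "\<exists>c. E u' c \<and> E c w'" unfolding mpow_adj_two_eq_0_iff by blast
  qed
qed

lemma quad_form_adj_le_neg_two:
  assumes sym: "\<And>i j. E i j \<Longrightarrow> E j i" and irrefl: "\<And>i. \<not> E i i" and uv: "E u v"
  defines "y \<equiv> \<lambda>w. if w = u then 1 else if w = v then -1 else (0::real)"
  shows "quad_form (adj E) y = -2" and "sq_norm y = 2"
proof -
  have "u \<noteq> v" using uv irrefl by auto
  hence delta: "(\<Sum>w\<in>UNIV. g w * y w) = g u - g v" for g :: "'a \<Rightarrow> real"
  proof -
    assume "u \<noteq> v"
    have "(\<Sum>w\<in>UNIV. g w * y w) = (\<Sum>w\<in>UNIV. (if w = u then g w else 0) - (if w = v then g w else 0))"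
      by (rule sum.cong) (use \<open>u \<noteq> v\<close> in \<open>auto simp: y_def\<close>)
    thus ?thesis by (simp add: sum_subtractf)
  qed
  have "quad_form (adj E) y = (\<Sum>i\<in>UNIV. (\<Sum>j\<in>UNIV. adj E i j * y j) * y i)"
    unfolding quad_form_def by (simp add: sum_distrib_left sum_distrib_right mult_ac)
  also have "\<dots> = (adj E u u - adj E u v) - (adj E v u - adj E v v)"
    by (simp only: delta)
  finally show "quad_form (adj E) y = -2" using uv sym irrefl by (simp add: adj_def)
  have "sq_norm y = y u - y v" unfolding sq_norm_def power2_eq_square by (rule delta)
  thus "sq_norm y = 2" using \<open>u \<noteq> v\<close> by (simp add: y_def)
qed

lemma least_rayleigh_quotient_adj_le_neg1:
  assumes "\<And>i j. E i j \<Longrightarrow> E j i" "\<And>i. \<not> E i i" "E u v"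
    and "least_rayleigh_quotient (adj E) lam"
  shows "lam \<le> -1"
proof -
  define y where "y w = (if w = u then 1 else if w = v then -1 else (0::real))" for w
  have "lam * sq_norm y \<le> quad_form (adj E) y"
    using assms(4) unfolding least_rayleigh_quotient_def by blast
  thus ?thesis using quad_form_adj_le_neg_two[of E u v, OF assms(1-3)] unfolding y_def by simp
qed

section \<open>Spectral bounds and vector colorings\<close>

lemma regular_sum_adj:
  assumes "\<And>i. (\<Sum>j\<in>UNIV. adj E i j) = k"
  shows "(\<Sum>i\<in>UNIV. \<Sum>j\<in>UNIV. adj E i j * f i) = k * (\<Sum>i\<in>UNIV. f i)"
proof -
  have "(\<Sum>i\<in>UNIV. \<Sum>j\<in>UNIV. adj E i j * f i) = (\<Sum>i\<in>UNIV. (\<Sum>j\<in>UNIV. adj E i j) * f i)"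
    by (simp add: sum_distrib_right)
  thus ?thesis by (simp add: assms sum_distrib_left)
qed

text \<open>For a \<open>k\<close>-regular graph, \<open>k |y|\<^sup>2 + y\<^sup>T A y = 1/2 \<Sum>\<^sub>i\<^sub>j A\<^sub>i\<^sub>j (y\<^sub>i + y\<^sub>j)\<^sup>2 \<ge> 0\<close>.\<close>

lemma quad_form_adj_ge_neg_degree:
  assumes sym: "\<And>i j. E i j \<Longrightarrow> E j i" and reg: "\<And>i. (\<Sum>j\<in>UNIV. adj E i j) = k"
  shows "- k * sq_norm y \<le> quad_form (adj E) y"
proof -
  have left: "(\<Sum>i\<in>UNIV. \<Sum>j\<in>UNIV. adj E i j * (y i)\<^sup>2) = k * sq_norm y"
    unfolding sq_norm_def by (rule regular_sum_adj[OF reg])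
  have "(\<Sum>i\<in>UNIV. \<Sum>j\<in>UNIV. adj E i j * (y j)\<^sup>2) = (\<Sum>j\<in>UNIV. \<Sum>i\<in>UNIV. adj E j i * (y j)\<^sup>2)"
    by (subst sum.swap) (simp add: adj_sym[OF sym])
  hence right: "(\<Sum>i\<in>UNIV. \<Sum>j\<in>UNIV. adj E i j * (y j)\<^sup>2) = k * sq_norm y"
    using left by simp
  have "0 \<le> (\<Sum>i\<in>UNIV. \<Sum>j\<in>UNIV. adj E i j * (y i + y j)\<^sup>2)"
    by (intro sum_nonneg) (simp add: adj_def)
  also have "\<dots> = (\<Sum>i\<in>UNIV. \<Sum>j\<in>UNIV. adj E i j * (y i)\<^sup>2) + (\<Sum>i\<in>UNIV. \<Sum>j\<in>UNIV. adj E i j * (y j)\<^sup>2)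
      + 2 * quad_form (adj E) y"
    unfolding quad_form_def by (simp add: power2_sum algebra_simps sum.distrib sum_distrib_left)
  finally show ?thesis unfolding left right by simp
qed

lemma sum_quad_form_coordinates:
  "(\<Sum>s<d. quad_form M (\<lambda>i. q i s)) = (\<Sum>i\<in>UNIV. \<Sum>j\<in>UNIV. M i j * ip d (q i) (q j))"
proof -
  have "(\<Sum>s<d. quad_form M (\<lambda>i. q i s)) = (\<Sum>s<d. \<Sum>i\<in>UNIV. \<Sum>j\<in>UNIV. M i j * (q i s * q j s))"
    unfolding quad_form_def by (simp add: mult.assoc)
  also have "\<dots> = (\<Sum>i\<in>UNIV. \<Sum>s<d. \<Sum>j\<in>UNIV. M i j * (q i s * q j s))"
    by (rule sum.swap)
  also have "\<dots> = (\<Sum>i\<in>UNIV. \<Sum>j\<in>UNIV. \<Sum>s<d. M i j * (q i s * q j s))"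
    by (rule sum.cong[OF refl]) (rule sum.swap)
  finally show ?thesis unfolding ip_def by (simp add: sum_distrib_left)
qed

lemma sum_sq_norm_coordinates:
  "(\<Sum>s<d. sq_norm (\<lambda>i. q i s)) = (\<Sum>i\<in>UNIV. ip d (q i) (q i))"
  unfolding sq_norm_def ip_def power2_eq_square by (rule sum.swap)

text \<open>Hoffman-type lower bound: summing the Rayleigh inequality over the coordinates of a
  vector \<open>t\<close>-coloring gives \<open>n lam \<le> n k (-1 / (t - 1))\<close>.\<close>

lemma vector_coloring_hoffman_bound:
  fixes E :: "'a::finite \<Rightarrow> 'a \<Rightarrow> bool"
  assumes reg: "\<And>i. (\<Sum>j\<in>UNIV. adj E i j) = k"
    and least: "\<And>y. lam * sq_norm y \<le> quad_form (adj E) y" and lam: "lam < 0"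
    and col: "vector_coloring E t d q" and t: "t > 1"
  shows "1 - k / lam \<le> t"
proof -
  have "lam * CARD('a) = (\<Sum>s<d. lam * sq_norm (\<lambda>i. q i s))"
    using col by (simp add: sum_distrib_left[symmetric] sum_sq_norm_coordinates vector_coloring_def)
  also have "\<dots> \<le> (\<Sum>s<d. quad_form (adj E) (\<lambda>i. q i s))"
    by (intro sum_mono least)
  also have "\<dots> = (\<Sum>i\<in>UNIV. \<Sum>j\<in>UNIV. adj E i j * ip d (q i) (q j))"
    by (rule sum_quad_form_coordinates)
  also have "\<dots> \<le> (\<Sum>i\<in>UNIV. \<Sum>j\<in>UNIV. adj E i j * (-1 / (t - 1)))"
    by (intro sum_mono) (use col in \<open>auto simp: adj_def vector_coloring_def\<close>)
  also have "\<dots> = k * (-1 / (t - 1)) * CARD('a)"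
    using regular_sum_adj[OF reg, of "\<lambda>_. -1 / (t - 1)"] by simp
  finally have "lam * CARD('a) \<le> k * (-1 / (t - 1)) * CARD('a)" .
  hence "lam \<le> k * (-1 / (t - 1))" by (rule mult_right_le_imp_le) simp
  hence "lam * (t - 1) \<le> - k" using t by (simp add: field_simps)
  thus ?thesis using lam by (simp add: field_simps)
qed

lemma ip_columns_realization:
  fixes R :: "'a::finite \<Rightarrow> 'b \<Rightarrow> real"
  shows "\<exists>n p. \<forall>i j. ip n (p i) (p j) = (\<Sum>k\<in>UNIV. R k i * R k j)"
proof -
  obtain e where e: "bij_betw e {0..<CARD('a)} (UNIV :: 'a set)"
    using ex_bij_betw_nat_finite[of "UNIV :: 'a set"] by auto
  have "ip CARD('a) (\<lambda>k. R (e k) i) (\<lambda>k. R (e k) j) = (\<Sum>k\<in>UNIV. R k i * R k j)" for i j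
    unfolding ip_def lessThan_atLeast0 using sum.reindex_bij_betw[OF e, of "\<lambda>k. R k i * R k j"] by simp
  thus ?thesis by (intro exI[of _ "CARD('a)"] exI[of _ "\<lambda>i k. R (e k) i"]) simp
qed

lemma vector_coloring_comp_hom:
  "vector_coloring E t d p \<Longrightarrow> graph_hom E g \<Longrightarrow> vector_coloring E t d (\<lambda>i. p (g i))"
  unfolding vector_coloring_def graph_hom_def by auto

lemma chi_v_eqI:
  assumes "2 \<le> t" "vector_coloring E t d p"
    and "\<And>t' d' p'. 2 \<le> t' \<Longrightarrow> vector_coloring E t' d' p' \<Longrightarrow> t \<le> t'"
  shows "chi_v E = t"
  unfolding chi_v_def by (rule cInf_eq_minimum) (use assms in auto)

lemma ip_sym: "ip n x y = ip n y x"
  unfolding ip_def by (simp add: mult.commute)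

lemma ip_diff_right: "ip n x (\<lambda>k. y k - z k) = ip n x y - ip n x z"
  unfolding ip_def by (simp add: algebra_simps sum_subtractf)

lemma ip_diff_left: "ip n (\<lambda>k. y k - z k) x = ip n y x - ip n z x"
  unfolding ip_def by (simp add: algebra_simps sum_subtractf)

lemma ip_scaled_right: "ip n x (\<lambda>k. c * y k) = c * ip n x y"
  unfolding ip_def by (simp add: algebra_simps sum_distrib_left)

lemma ip_scaled_left: "ip n (\<lambda>k. c * y k) x = c * ip n y x"
  unfolding ip_def by (simp add: algebra_simps sum_distrib_left)

lemma ip_reflection:
  assumes "ip n w w \<noteq> 0"
  defines "R \<equiv> \<lambda>z k. z k - (2 * ip n z w / ip n w w) * w k"
  shows "ip n (R z1) (R z2) = ip n z1 z2"
proof -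
  define a b c where "a = ip n z1 w" and "b = ip n z2 w" and "c = ip n w w"
  have "ip n (R z1) (R z2) = ip n z1 z2 - (2 * a / c) * b - (2 * b / c) * a + (2 * a / c) * (2 * b / c) * c"
    unfolding R_def ip_diff_left ip_diff_right ip_scaled_left ip_scaled_right a_def b_def c_def
    by (simp add: ip_sym[of n w z1] ip_sym[of n w z2] algebra_simps)
  also have "\<dots> = ip n z1 z2" using assms(1) unfolding c_def[symmetric] by (simp add: field_simps)
  finally show ?thesis .
qed

lemma vector_coloring_reflect_component:
  assumes col: "vector_coloring E t n p"
    and R: "\<And>z1 z2. ip n (R z1) (R z2) = ip n z1 z2"
    and C: "\<And>i j. E i j \<Longrightarrow> C i \<longleftrightarrow> C j"
  shows "vector_coloring E t n (\<lambda>v. if C v then p v else R (p v))"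
  unfolding vector_coloring_def
proof (intro conjI allI impI)
  show "ip n (if C i then p i else R (p i)) (if C i then p i else R (p i)) = 1" for i
    using col unfolding vector_coloring_def by (simp add: R)
next
  fix i j assume "E i j"
  hence "ip n (if C i then p i else R (p i)) (if C j then p j else R (p j)) = ip n (p i) (p j)"
    using C by (simp add: R)
  thus "ip n (if C i then p i else R (p i)) (if C j then p j else R (p j)) \<le> -1 / (t - 1)"
    using col \<open>E i j\<close> unfolding vector_coloring_def by simp
qed

text \<open>Reflecting a whole component in the hyperplane bisecting \<open>p x\<close> and \<open>p y\<close>
  gives another optimal coloring that moves \<open>p y\<close> to \<open>p x\<close>.\<close>

lemma uniquely_vector_colorable_unreachable:
  assumes sym: "\<And>i j. E i j \<Longrightarrow> E j i" and uvc: "uniquely_vector_colorable E"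
    and col: "vector_coloring E (chi_v E) n p" and xy: "\<not> reachable E x y"
  shows "ip n (p x) (p y) = 1"
proof (rule ccontr)
  assume s1: "ip n (p x) (p y) \<noteq> 1"
  obtain s where xy_s: "ip n (p x) (p y) = s" by blast
  hence yx_s: "ip n (p y) (p x) = s" using ip_sym by metis
  have unit: "ip n (p i) (p i) = 1" for i using col unfolding vector_coloring_def by blast
  define w where "w = (\<lambda>k. p y k - p x k)"
  have yw: "ip n (p y) w = 1 - s" and xw: "ip n (p x) w = s - 1"
    unfolding w_def ip_diff_right by (simp_all add: unit xy_s yx_s)
  have "ip n w w = ip n (p y) w - ip n (p x) w"
    using ip_diff_left[of n "p y" "p x" w] unfolding w_def .
  hence ww: "ip n w w = 2 * (1 - s)" using yw xw by simp
  have s1': "1 - s \<noteq> 0" using s1 xy_s by simp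
  define R where "R z = (\<lambda>k. z k - (2 * ip n z w / ip n w w) * w k)" for z
  have R_ip: "ip n (R z1) (R z2) = ip n z1 z2" for z1 z2
    unfolding R_def by (rule ip_reflection) (use ww s1' in simp)
  have "2 * (1 - s) / (2 * (1 - s)) = 1" using s1' by simp
  hence xRy: "ip n (p x) (R (p y)) = 1"
    unfolding R_def ip_diff_right ip_scaled_right xw yw ww xy_s by simp
  define q where "q v = (if reachable E x v then p v else R (p v))" for v
  have "vector_coloring E (chi_v E) n q"
    unfolding q_def
  proof (rule vector_coloring_reflect_component[OF col R_ip])
    show "reachable E x i \<longleftrightarrow> reachable E x j" if "E i j" for i j
      using sym[OF that] that reachable_step[of E x] by blast
  qed
  hence "gram n q = gram n p" using uvc col unfolding uniquely_vector_colorable_def by blast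
  hence "gram n q x y = gram n p x y" by simp
  hence "ip n (q x) (q y) = s" unfolding gram_def xy_s .
  thus False using xRy s1' xy reachable_refl[of E x] unfolding q_def by simp
qed

section \<open>Distance-2 classes and retractions\<close>

text \<open>Distance 3 is impossible: a common neighbour of the middle edge would be adjacent
  to both ends, since otherwise it would lie at distance 2 from, and hence in the same
  class as, one of its own neighbours.\<close>

lemma dist_le_2_if_dist2_classes:
  assumes sym: "\<And>i j. E i j \<Longrightarrow> E j i"
    and eqv: "equivp T" and edge: "\<And>i j. E i j \<Longrightarrow> \<not> T i j"
    and dist2: "\<And>x y. dist2 E x y \<Longrightarrow> T x y"
    and tri: "\<And>u w. E u w \<Longrightarrow> \<exists>c. E u c \<and> E c w"
    and xu: "dist2 E x u" and uy: "E u y"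
  shows "x = y \<or> E x y \<or> dist2 E x y"
proof (rule ccontr)
  have Tsym: "T a b \<Longrightarrow> T b a" for a b using eqv by (meson equivp_symp)
  have Ttrans: "T a b \<Longrightarrow> T b c \<Longrightarrow> T a c" for a b c using eqv by (meson equivp_transp)
  assume far: "\<not> (x = y \<or> E x y \<or> dist2 E x y)"
  from xu obtain a where a: "E x a" "E a u" "\<not> E x u" unfolding dist2_def by blast
  have Txu: "T x u" by (rule dist2[OF xu])
  have "a \<noteq> y" "\<not> E a y" using far a unfolding dist2_def by blast+
  hence "dist2 E a y" unfolding dist2_def using a(2) uy by blast
  hence Tay: "T a y" by (rule dist2)
  obtain c where c: "E a c" "E c u" using tri[OF a(2)] by blast
  have "E c x"
  proof (rule ccontr)
    assume "\<not> E c x"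
    moreover have "c \<noteq> x" using c(2) a(3) by blast
    ultimately have "dist2 E c x" unfolding dist2_def using sym[OF c(1)] sym[OF a(1)] by blast
    hence "T c u" using Ttrans[OF dist2 Txu] by blast
    thus False using edge[OF c(2)] by blast
  qed
  moreover have "E c y"
  proof (rule ccontr)
    assume "\<not> E c y"
    moreover have "c \<noteq> y" using c(1) \<open>\<not> E a y\<close> by blast
    ultimately have "dist2 E c y" unfolding dist2_def using uy c(2) by blast
    hence "T c a" using Ttrans[OF dist2 Tsym[OF Tay]] by blast
    thus False using edge[OF c(1)] Tsym by blast
  qed
  ultimately have "dist2 E x y" unfolding dist2_def using far sym by blast
  thus False using far by blast
qed

lemma walk_dist_le_2_if_dist2_classes:
  assumes sym: "\<And>i j. E i j \<Longrightarrow> E j i"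
    and eqv: "equivp T" and edge: "\<And>i j. E i j \<Longrightarrow> \<not> T i j"
    and dist2: "\<And>x y. dist2 E x y \<Longrightarrow> T x y"
    and tri: "\<And>u w. E u w \<Longrightarrow> \<exists>c. E u c \<and> E c w"
  shows "walk E l x y \<Longrightarrow> x = y \<or> E x y \<or> dist2 E x y"
proof (induction l arbitrary: y)
  case 0
  then show ?case by simp
next
  case (Suc l)
  then obtain u where u: "walk E l x u" "E u y" by auto
  from Suc.IH[OF u(1)] consider "x = u" | "E x u" | "dist2 E x u" by blast
  then show ?case
  proof cases
    case 1
    then show ?thesis using u by simp
  next
    case 2
    then show ?thesis using u unfolding dist2_def by blast
  next
    case 3
    then show ?thesis using dist_le_2_if_dist2_classes[of E T x u y, OF sym eqv edge dist2 tri] u(2) by blast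
  qed
qed

lemma complete_multipartite_if_equivp:
  assumes "equivp T" "\<And>i j. E i j \<longleftrightarrow> \<not> T i j"
  shows "complete_multipartite E"
proof -
  define c where "c i = (SOME j. T i j)" for i
  have Tsym: "T a b \<Longrightarrow> T b a" for a b using assms(1) by (meson equivp_symp)
  have Ttrans: "T a b \<Longrightarrow> T b c \<Longrightarrow> T a c" for a b c using assms(1) by (meson equivp_transp)
  have "T i (c i)" for i unfolding c_def by (rule someI[of _ i]) (rule equivp_reflp[OF assms(1)])
  moreover have "c i = c j" if "T i j" for i j
  proof -
    have "T i = T j" using assms(1) that unfolding equivp_def by blast
    thus ?thesis unfolding c_def by simp
  qed
  ultimately have "c i = c j \<longleftrightarrow> T i j" for i j using Tsym Ttrans by metis
  thus ?thesis unfolding complete_multipartite_def using assms(2) by blast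
qed

lemma complete_multipartite_if_dist2_classes:
  assumes sym: "\<And>i j. E i j \<Longrightarrow> E j i"
    and eqv: "equivp T" and edge: "\<And>i j. E i j \<Longrightarrow> \<not> T i j"
    and dist2: "\<And>x y. dist2 E x y \<Longrightarrow> T x y"
    and tri: "\<And>u w. E u w \<Longrightarrow> \<exists>c. E u c \<and> E c w"
    and conn: "\<And>x y. reachable E x y"
  shows "complete_multipartite E"
proof (rule complete_multipartite_if_equivp[OF eqv])
  fix i j
  obtain l where "walk E l i j" using conn unfolding reachable_def by blast
  hence "i = j \<or> E i j \<or> dist2 E i j"
    using walk_dist_le_2_if_dist2_classes[of E T, OF sym eqv edge dist2 tri] by blast
  thus "E i j \<longleftrightarrow> \<not> T i j" using edge dist2 equivp_reflp[OF eqv, of i] unfolding dist2_def by blast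
qed

lemma even_walk_if_dist2_classes:
  assumes eqv: "equivp T" and dist2: "\<And>x y. dist2 E x y \<Longrightarrow> T x y"
    and triangle_free: "\<And>u w c. E u w \<Longrightarrow> E u c \<Longrightarrow> \<not> E c w"
  shows "walk E (2 * m) x y \<Longrightarrow> T x y"
proof (induction m arbitrary: y)
  case 0
  then show ?case using eqv by (simp add: equivp_reflp)
next
  case (Suc m)
  have "walk E (Suc (Suc (2 * m))) x y" using Suc.prems by simp
  then obtain u z where uz: "walk E (2 * m) x u" "E u z" "E z y" by auto
  have "T u y"
  proof (cases "u = y")
    case True
    then show ?thesis using eqv by (simp add: equivp_reflp)
  next
    case False
    hence "dist2 E u y" unfolding dist2_def using triangle_free uz by blast
    thus ?thesis using dist2 by blast
  qed
  thus ?case using Suc.IH[OF uz(1)] eqv by (meson equivp_transp)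
qed

lemma bipartite_if_dist2_classes:
  assumes sym: "\<And>i j. E i j \<Longrightarrow> E j i"
    and eqv: "equivp T" and edge: "\<And>i j. E i j \<Longrightarrow> \<not> T i j"
    and dist2: "\<And>x y. dist2 E x y \<Longrightarrow> T x y"
    and triangle_free: "\<And>u w c. E u w \<Longrightarrow> E u c \<Longrightarrow> \<not> E c w"
    and conn: "\<And>x y. reachable E x y"
  shows "bipartite E"
proof -
  have Tsym: "T a b \<Longrightarrow> T b a" for a b using eqv by (meson equivp_symp)
  have Ttrans: "T a b \<Longrightarrow> T b c \<Longrightarrow> T a c" for a b c using eqv by (meson equivp_transp)
  fix r :: 'a
  define S where "S = {v. \<exists>m. walk E (2 * m) r v}"
  have odd_edge: "j \<in> S" if "i \<notin> S" "E i j" for i j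
  proof -
    obtain l where l: "walk E l r i" using conn unfolding reachable_def by blast
    have "odd l"
    proof
      assume "even l"
      then obtain m where "l = 2 * m" by (rule evenE)
      thus False using l that(1) unfolding S_def by blast
    qed
    then obtain m where "l = Suc (2 * m)" by (metis oddE Suc_eq_plus1)
    hence "walk E (Suc (Suc (2 * m))) r j" using l that(2) by auto
    hence "walk E (2 * Suc m) r j" by simp
    thus ?thesis unfolding S_def by blast
  qed
  have even_edge: "\<not> (i \<in> S \<and> j \<in> S)" if "E i j" for i j
  proof
    assume "i \<in> S \<and> j \<in> S"
    then obtain m m' where "walk E (2 * m) r i" "walk E (2 * m') r j" unfolding S_def by blast
    moreover have "T r w" if "walk E (2 * k) r w" for k w
      using eqv dist2 triangle_free that by (rule even_walk_if_dist2_classes)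
    ultimately have "T i j" using Ttrans[OF Tsym] by blast
    thus False using edge[OF that] by blast
  qed
  have "i \<in> S \<longleftrightarrow> j \<notin> S" if "E i j" for i j
    using odd_edge[of j i] even_edge[OF that] sym[OF that] by blast
  thus ?thesis unfolding bipartite_def by blast
qed

text \<open>The set of vertices moved by an idempotent endomorphism \<open>g\<close> is closed under
  adjacency: if \<open>u\<close> moves and its neighbour \<open>w\<close> is fixed, then \<open>w\<close> is a common
  neighbour of \<open>u\<close> and \<open>g u\<close>, which would put these two in distance 2.\<close>

lemma retraction_eq_id:
  assumes sym: "\<And>i j. E i j \<Longrightarrow> E j i"
    and edge: "\<And>i j. E i j \<Longrightarrow> \<not> T i j"
    and not_dist2: "\<And>x y. dist2 E x y \<Longrightarrow> \<not> T x y"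
    and conn: "\<And>x y. reachable E x y"
    and hom: "graph_hom E g" and idem: "\<And>x. g (g x) = g x" and T_g: "\<And>x. T x (g x)"
  shows "g = id"
proof (rule ccontr)
  assume "g \<noteq> id"
  then obtain v where v: "g v \<noteq> v" by (auto simp: fun_eq_iff)
  define M where "M = {u. g u \<noteq> u}"
  have closed: "w \<in> M" if "u \<in> M" "E u w" for u w
  proof (rule ccontr)
    assume "w \<notin> M"
    hence "E w (g u)" using hom that(2) sym unfolding M_def graph_hom_def by force
    moreover have "\<not> E u (g u)" using edge T_g by blast
    ultimately have "dist2 E u (g u)" unfolding dist2_def using that M_def by auto
    thus False using not_dist2 T_g by blast
  qed
  obtain l where "walk E l v (g v)" using conn unfolding reachable_def by blast
  hence "g v \<in> M" using walk_closed[of M E l v "g v"] closed v unfolding M_def by blast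
  thus False using idem unfolding M_def by simp
qed

lemma funpow_periodic:
  fixes f :: "'a \<Rightarrow> 'a"
  assumes "(f ^^ i) x = (f ^^ (i + P)) x" "i \<le> k"
  shows "(f ^^ (k + c * P)) x = (f ^^ k) x"
proof (induction c)
  case 0
  then show ?case by simp
next
  case (Suc c)
  have "k + Suc c * P = (k - i + c * P) + (i + P)" and "k + c * P = (k - i + c * P) + i"
    using assms(2) by simp_all
  hence "(f ^^ (k + Suc c * P)) x = (f ^^ (k - i + c * P)) ((f ^^ (i + P)) x)"
    and "(f ^^ (k + c * P)) x = (f ^^ (k - i + c * P)) ((f ^^ i) x)"
    by (simp_all only: funpow_add comp_apply)
  thus ?case using Suc assms(1) by simp
qed

lemma funpow_eventually_periodic:
  fixes f :: "'a::finite \<Rightarrow> 'a"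
  shows "\<exists>i P. P > 0 \<and> i \<le> CARD('a) \<and> (f ^^ i) x = (f ^^ (i + P)) x"
proof -
  have "\<not> inj_on (\<lambda>k. (f ^^ k) x) {..CARD('a)}"
  proof
    assume "inj_on (\<lambda>k. (f ^^ k) x) {..CARD('a)}"
    hence "card ((\<lambda>k. (f ^^ k) x) ` {..CARD('a)}) = Suc CARD('a)" by (simp add: card_image)
    moreover have "card ((\<lambda>k. (f ^^ k) x) ` {..CARD('a)}) \<le> CARD('a)" by (rule card_mono) auto
    ultimately show False by simp
  qed
  then obtain a b where ab: "a \<le> CARD('a)" "b \<le> CARD('a)" "a \<noteq> b" "(f ^^ a) x = (f ^^ b) x"
    unfolding inj_on_def by auto
  show ?thesis
  proof (cases "a < b")
    case True
    hence "b - a > 0" "(f ^^ a) x = (f ^^ (a + (b - a))) x" using ab by auto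
    thus ?thesis using ab by blast
  next
    case False
    hence "a - b > 0" "(f ^^ b) x = (f ^^ (b + (a - b))) x" using ab by auto
    thus ?thesis using ab by blast
  qed
qed

text \<open>A common multiple \<open>m\<close> of the periods that exceeds all pre-periods makes \<open>f\<^sup>m\<close>
  idempotent.\<close>

lemma ex_idempotent_funpow:
  fixes f :: "'a::finite \<Rightarrow> 'a"
  shows "\<exists>m>0. \<forall>x. (f ^^ m) ((f ^^ m) x) = (f ^^ m) x"
proof -
  obtain I P where IP: "\<And>x. P x > 0 \<and> I x \<le> CARD('a) \<and> (f ^^ I x) x = (f ^^ (I x + P x)) x"
    using funpow_eventually_periodic by metis
  define m where "m = (\<Prod>x\<in>UNIV. P x) * Suc CARD('a)"
  have prod_pos: "(\<Prod>x\<in>UNIV. P x) > 0" using IP by (simp add: prod_pos)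
  have "(f ^^ m) ((f ^^ m) x) = (f ^^ m) x" for x
  proof -
    have "P x dvd m" unfolding m_def by (intro dvd_mult2 dvd_prodI) auto
    then obtain c where c: "m = c * P x" by (metis dvdE mult.commute)
    have "1 * Suc CARD('a) \<le> m" unfolding m_def by (rule mult_le_mono1) (use prod_pos in linarith)
    hence "I x \<le> m" using IP[of x] by simp
    hence "(f ^^ (m + c * P x)) x = (f ^^ m) x"
      using IP[of x] funpow_periodic[where f=f and i="I x" and x=x and P="P x" and k=m and c=c] by simp
    thus ?thesis using c by (simp add: funpow_add)
  qed
  moreover have "m > 0" unfolding m_def using prod_pos by simp
  ultimately show ?thesis by blast
qed

lemma graph_hom_funpow: "graph_hom E f \<Longrightarrow> graph_hom E (f ^^ m)"
  by (induction m) (auto simp: graph_hom_def)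

lemma graph_aut_if_bij_hom:
  fixes f :: "'a::finite \<Rightarrow> 'a"
  assumes "bij f" "graph_hom E f"
  shows "graph_aut E f"
proof -
  define P where "P = {(i, j). E i j}"
  define h where "h = (\<lambda>(i, j). (f i, f j))"
  have "inj_on h P" using assms(1) unfolding h_def inj_on_def bij_def by auto
  moreover have "h ` P \<subseteq> P" using assms(2) unfolding h_def P_def graph_hom_def by auto
  ultimately have surj: "h ` P = P" by (intro endo_inj_surj) simp_all
  have "E i j" if "E (f i) (f j)" for i j
  proof -
    have "(f i, f j) \<in> h ` P" using that surj unfolding P_def by simp
    then obtain i' j' where "E i' j'" "f i' = f i" "f j' = f j" unfolding h_def P_def by auto
    thus "E i j" using assms(1) unfolding bij_def inj_def by metis
  qed
  thus ?thesis using assms unfolding graph_aut_def graph_hom_def by blast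
qed

lemma is_core_if_idempotent_endomorphisms_id:
  fixes E :: "'a::finite \<Rightarrow> 'a \<Rightarrow> bool"
  assumes "\<And>g. graph_hom E g \<Longrightarrow> (\<And>x. g (g x) = g x) \<Longrightarrow> g = id"
  shows "is_core E"
  unfolding is_core_def
proof (intro allI impI)
  fix f assume hom: "graph_hom E f"
  obtain m where m: "m > 0" "\<And>x. (f ^^ m) ((f ^^ m) x) = (f ^^ m) x"
    using ex_idempotent_funpow by blast
  have fm: "f ^^ m = id" using assms[OF graph_hom_funpow[OF hom] m(2)] .
  obtain m' where m': "m = Suc m'" using m(1) not0_implies_Suc by blast
  have "f \<circ> f ^^ m' = id" using fm m' by simp
  moreover have "f ^^ m' \<circ> f = id" using fm m' by (simp only: funpow_Suc_right)
  ultimately have "bij f" using o_bij by blast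
  thus "graph_aut E f" using hom by (rule graph_aut_if_bij_hom)
qed

lemma is_core_if_retractions_within_classes:
  fixes E :: "'a::finite \<Rightarrow> 'a \<Rightarrow> bool"
  assumes sym: "\<And>i j. E i j \<Longrightarrow> E j i"
    and conn: "\<And>x y. reachable E x y"
    and eqv: "equivp T" and edge: "\<And>i j. E i j \<Longrightarrow> \<not> T i j"
    and dist2_cases: "(\<forall>x y. dist2 E x y \<longrightarrow> T x y) \<or> (\<forall>x y. dist2 E x y \<longrightarrow> \<not> T x y)"
    and triangle_cases: "(\<forall>u w. E u w \<longrightarrow> (\<exists>c. E u c \<and> E c w)) \<or> (\<forall>u w c. E u w \<longrightarrow> E u c \<longrightarrow> \<not> E c w)"
    and not_bipartite: "\<not> bipartite E" and not_multipartite: "\<not> complete_multipartite E"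
    and retraction: "\<And>g x. graph_hom E g \<Longrightarrow> (\<And>x. g (g x) = g x) \<Longrightarrow> T x (g x)"
  shows "is_core E"
proof (cases "\<forall>x y. dist2 E x y \<longrightarrow> T x y")
  case True
  show ?thesis
    using triangle_cases complete_multipartite_if_dist2_classes[OF sym eqv edge _ _ conn]
      bipartite_if_dist2_classes[OF sym eqv edge _ _ conn] True not_bipartite not_multipartite
    by blast
next
  case False
  hence not_dist2: "\<And>x y. dist2 E x y \<Longrightarrow> \<not> T x y" using dist2_cases by blast
  show ?thesis
  proof (rule is_core_if_idempotent_endomorphisms_id)
    fix g assume g: "graph_hom E g" "\<And>x. g (g x) = g x"
    show "g = id" by (rule retraction_eq_id[of E T g, OF sym edge not_dist2 conn g retraction[OF g]])
  qed
qed

section \<open>The least eigenprojector of a 2-walk-regular graph\<close>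

locale walk_regular_eigen_projector =
  fixes E :: "'a::finite \<Rightarrow> 'a \<Rightarrow> bool" and lam :: real and F :: "'a \<Rightarrow> 'a \<Rightarrow> real"
    and u v :: 'a
  assumes sym: "\<And>i j. E i j \<Longrightarrow> E j i"
    and irrefl: "\<And>i. \<not> E i i"
    and walk_regular: "two_walk_regular E"
    and edge: "E u v"
    and least: "least_rayleigh_quotient (adj E) lam"
    and projector: "eigen_projector (adj E) lam F"
begin

definition deg :: real where
  "deg = (\<Sum>j\<in>UNIV. adj E u j)"

lemma one_walk_regular: "one_walk_regular E"
  using walk_regular unfolding two_walk_regular_def by blast

lemma sum_adj_eq_deg: "(\<Sum>j\<in>UNIV. adj E i j) = deg"
  unfolding deg_def by (rule one_walk_regular_regular[OF sym one_walk_regular])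

lemma deg_pos: "deg > 0"
proof -
  have "adj E u v \<le> deg" unfolding deg_def by (rule member_le_sum) (auto simp: adj_def)
  thus ?thesis using edge by (simp add: adj_def)
qed

lemma lam_le_neg1: "lam \<le> -1"
  by (rule least_rayleigh_quotient_adj_le_neg1[OF sym irrefl edge least])

lemma neg_deg_le_lam: "- deg \<le> lam"
proof -
  obtain x where "sq_norm x = 1" "quad_form (adj E) x = lam"
    using least unfolding least_rayleigh_quotient_def by blast
  thus ?thesis using quad_form_adj_ge_neg_degree[OF sym sum_adj_eq_deg, of x] by simp
qed

lemma F_sym: "F i j = F j i"
  and F_eigen: "mmult (adj E) F = (\<lambda>i j. lam * F i j)"
  and F_idem: "mmult F F = F"
  and F_nonzero: "F \<noteq> (\<lambda>i j. 0)"
  and F_poly: "\<exists>p. F = poly_mat (adj E) p"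
  using projector unfolding eigen_projector_def by blast+

definition diag_entry :: real where
  "diag_entry = F u u"

definition edge_entry :: real where
  "edge_entry = F u v"

lemma F_diag: "F i i = diag_entry"
  unfolding diag_entry_def
  using F_poly poly_mat_eq_if_mpow_eq[OF one_walk_regular_diag[OF one_walk_regular]] by blast

lemma F_edge: "E i j \<Longrightarrow> F i j = edge_entry"
  unfolding edge_entry_def
  using F_poly poly_mat_eq_if_mpow_eq[OF one_walk_regular_edge[OF one_walk_regular _ edge]] by blast

lemma F_dist2: "dist2 E i j \<Longrightarrow> dist2 E i' j' \<Longrightarrow> F i j = F i' j'"
  using F_poly poly_mat_eq_if_mpow_eq[OF two_walk_regular_dist2[OF walk_regular]] by blast

lemma F_unreachable: "\<not> reachable E x y \<Longrightarrow> F x y = 0"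
  using F_poly poly_mat_adj_unreachable by blast

lemma F_gram: "(\<Sum>k\<in>UNIV. F k i * F k j) = F i j"
proof -
  have "F i j = mmult F F i j" using F_idem by simp
  also have "\<dots> = (\<Sum>k\<in>UNIV. F k i * F k j)" unfolding mmult_def using F_sym by simp
  finally show ?thesis by simp
qed

lemma F_diag_pos: "diag_entry > 0"
proof -
  have diag: "diag_entry = (\<Sum>k\<in>UNIV. (F k i)\<^sup>2)" for i
    using F_gram[of i i] F_diag[of i] by (simp add: power2_eq_square)
  have "diag_entry \<noteq> 0"
  proof
    assume "diag_entry = 0"
    hence "F k i = 0" for k i using diag[of i] by (simp add: sum_nonneg_eq_0_iff)
    hence "F = (\<lambda>i j. 0)" by (simp add: fun_eq_iff)
    thus False using F_nonzero by simp
  qed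
  moreover have "diag_entry \<ge> 0" unfolding diag[of u] by (simp add: sum_nonneg)
  ultimately show ?thesis by simp
qed

lemma deg_F_edge: "deg * edge_entry = lam * diag_entry"
proof -
  have "lam * diag_entry = mmult (adj E) F u u" using F_eigen unfolding diag_entry_def by simp
  also have "\<dots> = (\<Sum>j\<in>UNIV. adj E u j * edge_entry)"
    unfolding mmult_def by (rule sum.cong) (auto simp: adj_def F_edge sym)
  also have "\<dots> = deg * edge_entry" by (simp add: deg_def sum_distrib_right)
  finally show ?thesis by simp
qed

lemma F_edge_neg: "edge_entry < 0"
proof -
  have "deg * edge_entry < 0" unfolding deg_F_edge using lam_le_neg1 F_diag_pos by (simp add: mult_neg_pos)
  thus ?thesis using deg_pos by (simp add: mult_less_0_iff)
qed

definition chi :: real where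
  "chi = 1 - deg / lam"

lemma chi_ge_2: "2 \<le> chi"
  using lam_le_neg1 neg_deg_le_lam unfolding chi_def by (simp add: field_simps)

lemma projector_vector_coloring:
  "\<exists>n p. vector_coloring E chi n p \<and> (\<forall>i j. ip n (p i) (p j) = F i j / diag_entry)"
proof -
  define s where "s = sqrt (diag_entry)"
  have s: "s * s = diag_entry" unfolding s_def using F_diag_pos by simp
  obtain n p where p: "\<And>i j. ip n (p i) (p j) = (\<Sum>k\<in>UNIV. (F k i / s) * (F k j / s))"
    using ip_columns_realization[of "\<lambda>k i. F k i / s"] by blast
  have gram: "ip n (p i) (p j) = F i j / diag_entry" for i j
    unfolding p by (simp add: F_gram sum_divide_distrib[symmetric] s flip: times_divide_times_eq)
  have "-1 / (chi - 1) = edge_entry / diag_entry"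
    using deg_F_edge deg_pos lam_le_neg1 F_diag_pos unfolding chi_def by (simp add: field_simps)
  hence "vector_coloring E chi n p"
    unfolding vector_coloring_def gram using F_diag F_edge F_diag_pos by simp
  thus ?thesis using gram by blast
qed

lemma chi_v_eq_chi: "chi_v E = chi"
proof -
  obtain n p where "vector_coloring E chi n p" using projector_vector_coloring by blast
  moreover have "chi \<le> t" if "2 \<le> t" "vector_coloring E t d q" for t d q
    using vector_coloring_hoffman_bound[OF sum_adj_eq_deg _ _ that(2)] least lam_le_neg1 that(1)
    unfolding least_rayleigh_quotient_def chi_def by simp
  ultimately show ?thesis using chi_ge_2 by (intro chi_v_eqI) blast+
qed

end

locale uniquely_colorable_walk_regular = walk_regular_eigen_projector +
  assumes uvc: "uniquely_vector_colorable E"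
begin

lemma F_hom_invariant:
  assumes "graph_hom E g"
  shows "F (g i) (g j) = F i j"
proof -
  obtain n p where p: "vector_coloring E (chi_v E) n p" "\<And>i j. ip n (p i) (p j) = F i j / diag_entry"
    using projector_vector_coloring unfolding chi_v_eq_chi by blast
  have "vector_coloring E (chi_v E) n (\<lambda>i. p (g i))"
    by (rule vector_coloring_comp_hom[OF p(1) assms])
  hence "gram n (\<lambda>i. p (g i)) = gram n p" using uvc p(1) unfolding uniquely_vector_colorable_def by blast
  hence "ip n (p (g i)) (p (g j)) = ip n (p i) (p j)" unfolding gram_def by metis
  thus ?thesis using p(2) F_diag_pos by simp
qed

lemma reachable: "reachable E x y"
proof (rule ccontr)
  assume unreachable: "\<not> reachable E x y"
  obtain n p where p: "vector_coloring E (chi_v E) n p" "\<And>i j. ip n (p i) (p j) = F i j / diag_entry"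
    using projector_vector_coloring unfolding chi_v_eq_chi by blast
  have "ip n (p x) (p y) = 1"
    by (rule uniquely_vector_colorable_unreachable[OF sym uvc p(1) unreachable])
  thus False using p(2) F_unreachable[OF unreachable] by simp
qed

text \<open>Vertices with equal columns of \<open>F\<close> are exactly those that receive the same
  vector in the optimal coloring.\<close>

definition same_column :: "'a \<Rightarrow> 'a \<Rightarrow> bool" where
  "same_column i j \<longleftrightarrow> (\<forall>w. F w i = F w j)"

lemma same_column_iff: "same_column i j \<longleftrightarrow> F i j = diag_entry"
proof
  assume "same_column i j"
  thus "F i j = diag_entry" unfolding same_column_def using F_sym F_diag by metis
next
  assume ij: "F i j = diag_entry"
  have "(\<Sum>w\<in>UNIV. (F w i - F w j)\<^sup>2)
      = (\<Sum>w\<in>UNIV. F w i * F w i) - 2 * (\<Sum>w\<in>UNIV. F w i * F w j) + (\<Sum>w\<in>UNIV. F w j * F w j)"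
    by (simp add: power2_eq_square algebra_simps sum.distrib sum_subtractf sum_distrib_left)
  also have "\<dots> = 0" using F_gram F_diag ij by simp
  finally show "same_column i j"
    unfolding same_column_def by (simp add: sum_nonneg_eq_0_iff)
qed

lemma equivp_same_column: "equivp same_column"
  unfolding same_column_def by (intro equivpI reflpI sympI transpI) auto

lemma edge_not_same_column: "E i j \<Longrightarrow> \<not> same_column i j"
  using F_edge F_edge_neg F_diag_pos unfolding same_column_iff by simp

lemma dist2_same_column_cases:
  "(\<forall>x y. dist2 E x y \<longrightarrow> same_column x y) \<or> (\<forall>x y. dist2 E x y \<longrightarrow> \<not> same_column x y)"
  unfolding same_column_iff
proof (rule disjCI)
  assume "\<not> (\<forall>x y. dist2 E x y \<longrightarrow> F x y \<noteq> diag_entry)"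
  then obtain x y where "dist2 E x y" "F x y = diag_entry" by blast
  thus "\<forall>x y. dist2 E x y \<longrightarrow> F x y = diag_entry" using F_dist2 by metis
qed

lemma retraction_same_column:
  assumes "graph_hom E g" "\<And>x. g (g x) = g x"
  shows "same_column x (g x)"
proof -
  have "F x (g x) = F (g x) (g (g x))" using F_hom_invariant[OF assms(1)] by simp
  thus ?thesis unfolding same_column_iff assms(2) F_diag by simp
qed

lemma is_core:
  assumes "\<not> bipartite E" "\<not> complete_multipartite E"
  shows "is_core E"
proof (rule is_core_if_retractions_within_classes[of E same_column, OF sym reachable equivp_same_column
      edge_not_same_column dist2_same_column_cases
      one_walk_regular_triangle_cases[OF one_walk_regular] assms])
  show "same_column x (g x)" if "graph_hom E g" "\<And>x. g (g x) = g x" for g x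
    using retraction_same_column that by blast
qed

end

theorem theorem4p11:
  fixes E :: "'a::finite \<Rightarrow> 'a \<Rightarrow> bool"
  assumes "\<And>i j. E i j \<Longrightarrow> E j i"
    and "\<And>i. \<not> E i i"
    and "two_walk_regular E"
    and "\<not> bipartite E"
    and "\<not> complete_multipartite E"
    and "uniquely_vector_colorable E"
  shows "is_core E"
proof -
  obtain u v where "E u v" using assms(4) unfolding bipartite_def by blast
  have adj_symmetric: "adj E i j = adj E j i" for i j by (rule adj_sym[OF assms(1)])
  obtain lam where lam: "least_rayleigh_quotient (adj E) lam"
    using least_rayleigh_quotient_exists by blast
  obtain X where "X \<noteq> (\<lambda>i j. 0)" "mmult (adj E) X = (\<lambda>i j. lam * X i j)"
    using least_rayleigh_quotient_eigenvector[of "adj E", OF adj_symmetric lam] by blast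
  then obtain F where "eigen_projector (adj E) lam F"
    using eigen_projector_exists[of "adj E", OF adj_symmetric] by blast
  interpret uniquely_colorable_walk_regular E lam F u v
    by unfold_locales (use assms lam \<open>E u v\<close> \<open>eigen_projector (adj E) lam F\<close> in auto)
  show ?thesis using is_core assms(4,5) .
qed

end
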